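(* Let $p\ge1$ be an integer. For all $x,y\in[0,1]^p$, $\overline{\Delta}_{\mathrm{JML1}}(x,y)\le\overline{\Delta}_{\mathrm{JML2}}(x,y)$.
   Context: For $x,y \in [0,1]^p$ write $\|x\|_1=\sum_{i=1}^p |x_i|$ and $\langle x,y\rangle=\sum_{i=1}^p x_iy_i$. Define $\overline{\Delta}_{\mathrm{JML1}}(x,y) = 1 - \frac{\|x\|_1+\|y\|_1-\|x-y\|_1}{\|x\|_1+\|y\|_1+\|x-y\|_1}$ and $\overline{\Delta}_{\mathrm{JML2}}(x,y) = 1 - \frac{\langle x,y\rangle}{\langle x,y\rangle+\|x-y\|_1}$. Both denominators vanish only when $x=y=0$; by convention both functions take the value $0$ at $(x,y)=(0,0)$. *)

theory Defs
  imports "HOL-Analysis.Analysis"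
begin

definition l1norm :: "real ^ 'p \<Rightarrow> real" where
  "l1norm x = (\<Sum>i\<in>UNIV. \<bar>x $ i\<bar>)"

definition ip :: "real ^ 'p \<Rightarrow> real ^ 'p \<Rightarrow> real" where
  "ip x y = (\<Sum>i\<in>UNIV. x $ i * y $ i)"

definition JML1 :: "real ^ 'p \<Rightarrow> real ^ 'p \<Rightarrow> real" where
  "JML1 x y = (if x = 0 \<and> y = 0 then 0 else
     1 - (l1norm x + l1norm y - l1norm (x - y)) / (l1norm x + l1norm y + l1norm (x - y)))"

definition JML2 :: "real ^ 'p \<Rightarrow> real ^ 'p \<Rightarrow> real" where
  "JML2 x y = (if x = 0 \<and> y = 0 then 0 else
     1 - ip x y / (ip x y + l1norm (x - y)))"

end

theory Submission
  imports Defs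
begin

text \<open>For nonnegative vectors, \<open>|a| + |b| - |a - b| = 2 min a b\<close> coordinatewise, so
  \<open>JML1 x y = 1 - m / (m + d)\<close> with \<open>m = (\<Sum>i. min (x $ i) (y $ i))\<close> and \<open>d = l1norm (x - y)\<close>,
  while by definition \<open>JML2 x y = 1 - s / (s + d)\<close> with \<open>s = ip x y\<close>. On the unit cube
  \<open>x $ i * y $ i \<le> min (x $ i) (y $ i)\<close>, so \<open>0 \<le> s \<le> m\<close>, and \<open>t / (t + d)\<close> is
  nondecreasing in \<open>t \<ge> 0\<close>.\<close>

lemma divide_add_right_mono:
  fixes s m d :: "'a :: linordered_field"
  assumes "0 \<le> s" "s \<le> m" "0 \<le> d"
  shows "s / (s + d) \<le> m / (m + d)"
proof (cases "s + d = 0")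
  case True
  then show ?thesis using assms by simp
next
  case False
  then have "0 < s + d" "0 < m + d" using assms by linarith+
  moreover have "s * (m + d) \<le> m * (s + d)"
    using assms by (simp add: algebra_simps mult_left_mono)
  ultimately show ?thesis by (simp add: divide_simps mult.commute)
qed

lemma l1norm_add_minus_l1norm_diff:
  fixes x y :: "real ^ 'p"
  assumes "\<forall>i. 0 \<le> x $ i" "\<forall>i. 0 \<le> y $ i"
  shows "l1norm x + l1norm y - l1norm (x - y) = 2 * (\<Sum>i\<in>UNIV. min (x $ i) (y $ i))"
  unfolding l1norm_def sum_distrib_left sum.distrib[symmetric] sum_subtractf[symmetric]
  by (rule sum.cong) (use assms in \<open>auto simp: min_def\<close>)

lemma JML1_eq_sum_min:
  fixes x y :: "real ^ 'p"
  assumes "\<forall>i. 0 \<le> x $ i" "\<forall>i. 0 \<le> y $ i"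
  shows "JML1 x y = (if x = 0 \<and> y = 0 then 0 else
    1 - (\<Sum>i\<in>UNIV. min (x $ i) (y $ i)) / ((\<Sum>i\<in>UNIV. min (x $ i) (y $ i)) + l1norm (x - y)))"
proof -
  define m where "m = (\<Sum>i\<in>UNIV. min (x $ i) (y $ i))"
  define d where "d = l1norm (x - y)"
  have minus: "l1norm x + l1norm y - d = 2 * m"
    unfolding m_def d_def by (rule l1norm_add_minus_l1norm_diff[OF assms])
  then have plus: "l1norm x + l1norm y + d = 2 * (m + d)"
    by simp
  show ?thesis
    unfolding JML1_def m_def[symmetric] d_def[symmetric] minus plus mult_divide_mult_cancel_left_if
    by simp
qed

lemma ip_nonneg:
  fixes x y :: "real ^ 'p"
  assumes "\<forall>i. 0 \<le> x $ i" "\<forall>i. 0 \<le> y $ i"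
  shows "0 \<le> ip x y"
  unfolding ip_def using assms by (simp add: sum_nonneg)

lemma ip_le_sum_min:
  fixes x y :: "real ^ 'p"
  assumes "\<forall>i. 0 \<le> x $ i \<and> x $ i \<le> 1" "\<forall>i. 0 \<le> y $ i \<and> y $ i \<le> 1"
  shows "ip x y \<le> (\<Sum>i\<in>UNIV. min (x $ i) (y $ i))"
  unfolding ip_def
proof (rule sum_mono)
  fix i
  have "0 \<le> x $ i" "x $ i \<le> 1" "0 \<le> y $ i" "y $ i \<le> 1"
    using assms by auto
  then show "x $ i * y $ i \<le> min (x $ i) (y $ i)"
    by (simp add: mult_left_le mult_left_le_one_le)
qed

theorem theorem4:
  fixes x y :: "real ^ 'p"
  assumes "\<forall>i. 0 \<le> x $ i \<and> x $ i \<le> 1"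
    and "\<forall>i. 0 \<le> y $ i \<and> y $ i \<le> 1"
  shows "JML1 x y \<le> JML2 x y"
proof -
  have x0: "\<forall>i. 0 \<le> x $ i" and y0: "\<forall>i. 0 \<le> y $ i"
    using assms by auto
  have d0: "0 \<le> l1norm (x - y)"
    unfolding l1norm_def by (simp add: sum_nonneg)
  show ?thesis
    unfolding JML1_eq_sum_min[OF x0 y0] JML2_def
    using divide_add_right_mono[OF ip_nonneg[OF x0 y0] ip_le_sum_min[OF assms] d0]
    by simp
qed

end
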